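(* Fix an STL formula $\varphi$ and $t\in\tau$. Let $V$ be the finite set of pairs $(i,t')$ such that some predicate $s_i-\pi\ge0$ appears in a pair $(s_i-\pi\ge0,\,t')\in E(\varphi,t)$, and set $M=|V|$. Then $\eta(\varphi,S,t)$ depends on $S$ only through the vector $v(S)=(s_i[t'])_{(i,t')\in V}\in[-1,1]^M$; regard it as a function $H$ of $v\in\mathbb{R}^M$, computed by the same recursive formulas. Let $S$ be a signal such that $\eta(\psi,S,t')\neq0$ for every $(\psi,t')\in E(\varphi,t)$. Then there is an open neighborhood $U\subseteq\mathbb{R}^M$ of $v(S)$ on which $H$ is well defined and $C^\infty$. In particular, $\eta(\varphi,\cdot,t)$ is smooth at every signal outside the set where some subformula's robustness vanishes at one of its evaluation times.
   Context: Let $\tau\subseteq\mathbb{R}_{\ge 0}$ be a discrete set of time points (e.g. $\tau=\mathbb{Z}_{\ge0}$). For $t\in\tau$ and $0\le a<b$, write $[t+a,t+b]$ for the set of points $t'\in\tau$ with $t+a\le t'\le t+b$, assumed finite and nonempty, and write $N$ for its cardinality. A signal is a map $S:\tau\to[-1,1]^n$ with components $s_1,\dots,s_n$. STL formulas are generated by $\varphi::=\top\mid\bot\mid\mu\mid\neg\varphi\mid\varphi_1\wedge\cdots\wedge\varphi_m\mid\varphi_1\vee\cdots\vee\varphi_m\mid\mathbf{G}_{[a,b]}\varphi\mid\mathbf{F}_{[a,b]}\varphi$ ($m\ge 2$), where each predicate $\mu$ has the form $s_i-\pi\ge0$ with $i\in\{1,\dots,n\}$ and $\pi\in[-1,1]$.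 For $x\in\mathbb{R}$ put $[x]_+=\max(x,0)$, $[x]_-=\min(x,0)$. AGM robustness $\eta(\varphi,S,t)$ is defined recursively: $\eta(\top,S,t)=1$; $\eta(\bot,S,t)=-1$; $\eta(s_i-\pi\ge0,S,t)=\tfrac12(s_i[t]-\pi)$; $\eta(\neg\varphi,S,t)=-\eta(\varphi,S,t)$. Writing $\eta_j=\eta(\varphi_j,S,t)$: $\eta(\varphi_1\wedge\cdots\wedge\varphi_m,S,t)=\big(\prod_{j=1}^m(1+\eta_j)\big)^{1/m}-1$ if all $\eta_j>0$, and $\frac1m\sum_j[\eta_j]_-$ otherwise; $\eta(\varphi_1\vee\cdots\vee\varphi_m,S,t)=\frac1m\sum_j[\eta_j]_+$ if some $\eta_j>0$, and $1-\big(\prod_{j=1}^m(1-\eta_j)\big)^{1/m}$ otherwise. Writing $\eta_{t'}=\eta(\varphi,S,t')$ for $t'\in[t+a,t+b]$: $\eta(\mathbf{G}_{[a,b]}\varphi,S,t)=\big(\prod_{t'}(1+\eta_{t'})\big)^{1/N}-1$ if all $\eta_{t'}>0$, and $\frac1N\sum_{t'}[\eta_{t'}]_-$ otherwise; $\eta(\mathbf{F}_{[a,b]}\varphi,S,t)=\frac1N\sum_{t'}[\eta_{t'}]_+$ if some $\eta_{t'}>0$, and $1-\big(\prod_{t'}(1-\eta_{t'})\big)^{1/N}$ otherwise (products and sums over $t'\in[t+a,t+b]$). Evaluation pairs: $E(\varphi,t)$ is the smallest set of (formula, time) pairs containing $(\varphi,t)$ and closed under three rules. If $(\neg\psi,t')\in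 E$ then $(\psi,t')\in E$. If $(\psi_1\wedge\cdots\wedge\psi_m,t')$ or $(\psi_1\vee\cdots\vee\psi_m,t')$ is in $E$, then $(\psi_j,t')\in E$ for all $j$. If $(\mathbf{G}_{[a,b]}\psi,t')$ or $(\mathbf{F}_{[a,b]}\psi,t')$ is in $E$, then $(\psi,t'')\in E$ for all $t''\in[t'+a,t'+b]$. *)

theory Defs
  imports "HOL-Analysis.Analysis"
begin

text \<open>STL formulas. Pred i c is the predicate s_i - c >= 0.
  Conj / Disj take a list of (at least two) subformulas.
  Glob a b p is G_[a,b] p, Fin a b p is F_[a,b] p.\<close>
datatype stl =
    Top | Bot | Pred nat real | Neg stl
  | Conj "stl list" | Disj "stl list"
  | Glob real real stl | Fin real real stl

definition window :: "real set \<Rightarrow> real \<Rightarrow> real \<Rightarrow> real \<Rightarrow> real set" where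
  "window T t a b = {t' \<in> T. t + a \<le> t' \<and> t' \<le> t + b}"

type_synonym signal = "nat \<Rightarrow> real \<Rightarrow> real"

fun eta :: "real set \<Rightarrow> signal \<Rightarrow> stl \<Rightarrow> real \<Rightarrow> real" where
  "eta T S Top t = 1"
| "eta T S Bot t = -1"
| "eta T S (Pred i c) t = (S i t - c) / 2"
| "eta T S (Neg p) t = - eta T S p t"
| "eta T S (Conj ps) t =
     (if (\<forall>p\<in>set ps. eta T S p t > 0)
      then root (length ps) (prod_list (map (\<lambda>p. 1 + eta T S p t) ps)) - 1
      else sum_list (map (\<lambda>p. min (eta T S p t) 0) ps) / real (length ps))"
| "eta T S (Disj ps) t =
     (if (\<exists>p\<in>set ps. eta T S p t > 0)
      then sum_list (map (\<lambda>p. max (eta T S p t) 0) ps) / real (length ps)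
      else 1 - root (length ps) (prod_list (map (\<lambda>p. 1 - eta T S p t) ps)))"
| "eta T S (Glob a b p) t =
     (if (\<forall>t'\<in>window T t a b. eta T S p t' > 0)
      then root (card (window T t a b)) (\<Prod>t'\<in>window T t a b. 1 + eta T S p t') - 1
      else (\<Sum>t'\<in>window T t a b. min (eta T S p t') 0) / real (card (window T t a b)))"
| "eta T S (Fin a b p) t =
     (if (\<exists>t'\<in>window T t a b. eta T S p t' > 0)
      then (\<Sum>t'\<in>window T t a b. max (eta T S p t') 0) / real (card (window T t a b))
      else 1 - root (card (window T t a b)) (\<Prod>t'\<in>window T t a b. 1 - eta T S p t'))"

inductive_set evalpairs :: "real set \<Rightarrow> stl \<Rightarrow> real \<Rightarrow> (stl \<times> real) set"
  for T :: "real set" and phi :: stl and t :: real where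
  base: "(phi, t) \<in> evalpairs T phi t"
| neg: "(Neg p, t') \<in> evalpairs T phi t \<Longrightarrow> (p, t') \<in> evalpairs T phi t"
| conj: "(Conj ps, t') \<in> evalpairs T phi t \<Longrightarrow> p \<in> set ps \<Longrightarrow> (p, t') \<in> evalpairs T phi t"
| disj: "(Disj ps, t') \<in> evalpairs T phi t \<Longrightarrow> p \<in> set ps \<Longrightarrow> (p, t') \<in> evalpairs T phi t"
| glob: "(Glob a b p, t') \<in> evalpairs T phi t \<Longrightarrow> t'' \<in> window T t' a b \<Longrightarrow> (p, t'') \<in> evalpairs T phi t"
| fin: "(Fin a b p, t') \<in> evalpairs T phi t \<Longrightarrow> t'' \<in> window T t' a b \<Longrightarrow> (p, t'') \<in> evalpairs T phi t"

definition stl_wf :: "real set \<Rightarrow> nat \<Rightarrow> stl \<Rightarrow> real \<Rightarrow> bool" where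
  "stl_wf T n phi t \<longleftrightarrow>
     (\<forall>(p, t') \<in> evalpairs T phi t.
        (\<forall>i c. p = Pred i c \<longrightarrow> 1 \<le> i \<and> i \<le> n \<and> -1 \<le> c \<and> c \<le> 1)
      \<and> (\<forall>ps. (p = Conj ps \<or> p = Disj ps) \<longrightarrow> 2 \<le> length ps)
      \<and> (\<forall>a b q. (p = Glob a b q \<or> p = Fin a b q) \<longrightarrow>
            0 \<le> a \<and> a < b \<and> finite (window T t' a b) \<and> window T t' a b \<noteq> {}))"

definition predvars :: "real set \<Rightarrow> stl \<Rightarrow> real \<Rightarrow> (nat \<times> real) set" where
  "predvars T phi t = {(i, t'). \<exists>c. (Pred i c, t') \<in> evalpairs T phi t}"

text \<open>C-infinity on an open set U of R^m (coordinates): all partial derivatives of all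
  orders exist on U and are continuous, i.e. f lies in a family of functions that is
  closed under taking partial derivatives and consists of functions continuous on U.\<close>
definition smooth_on :: "(real ^ 'm) set \<Rightarrow> (real ^ 'm \<Rightarrow> real) \<Rightarrow> bool" where
  "smooth_on U f \<longleftrightarrow>
     (\<exists>D. f \<in> D \<and>
        (\<forall>g\<in>D. continuous_on U g \<and>
           (\<forall>j. \<exists>g'\<in>D. \<forall>x\<in>U.
               ((\<lambda>s. g (x + s *\<^sub>R axis j 1)) has_real_derivative g' x) (at 0))))"

end

theory Submission imports Defs begin

text \<open>Call a function on an open set \<open>U \<subseteq> \<real>\<^sup>M\<close> radical if it is built from constants and
  coordinates by sums, products, and inverses and roots of positive functions. Radical functions
  are smooth because their partial derivatives are again radical. Once the signs of its arguments
  are fixed, an AGM conjunction is a radical expression in them; since no evaluated subformula has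
  robustness 0 at \<open>v(S)\<close>, continuity keeps all these signs constant near \<open>v(S)\<close>. Induction over
  the evaluation pairs therefore shows that every robustness value agrees near \<open>v(S)\<close> with a
  radical function. Disjunctions reduce to conjunctions by duality, which holds wherever no
  argument vanishes.\<close>

inductive_set radical_on :: "(real^'m::finite) set \<Rightarrow> (real^'m \<Rightarrow> real) set" for U where
  const: "(\<lambda>x. c) \<in> radical_on U"
| coordinate: "(\<lambda>x. x $ k) \<in> radical_on U"
| add: "f \<in> radical_on U \<Longrightarrow> g \<in> radical_on U \<Longrightarrow> (\<lambda>x. f x + g x) \<in> radical_on U"
| mult: "f \<in> radical_on U \<Longrightarrow> g \<in> radical_on U \<Longrightarrow> (\<lambda>x. f x * g x) \<in> radical_on U"
| inverse: "f \<in> radical_on U \<Longrightarrow> \<forall>x\<in>U. 0 < f x \<Longrightarrow> (\<lambda>x. inverse (f x)) \<in> radical_on U"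
| root: "f \<in> radical_on U \<Longrightarrow> \<forall>x\<in>U. 0 < f x \<Longrightarrow> (\<lambda>x. root m (f x)) \<in> radical_on U"
| cong: "f \<in> radical_on U \<Longrightarrow> \<forall>x\<in>U. g x = f x \<Longrightarrow> g \<in> radical_on U"

lemma radical_on_subset: "f \<in> radical_on U \<Longrightarrow> V \<subseteq> U \<Longrightarrow> f \<in> radical_on V"
proof (induction rule: radical_on.induct)
  case (cong f g)
  then show ?case by (blast intro: radical_on.cong)
qed (auto intro: radical_on.const radical_on.coordinate radical_on.add radical_on.mult
    radical_on.inverse radical_on.root)

lemma radical_on_power: "f \<in> radical_on U \<Longrightarrow> (\<lambda>x. f x ^ k) \<in> radical_on U"
  by (induction k) (simp_all add: radical_on.const radical_on.mult)

lemma radical_on_imp_continuous_on: "f \<in> radical_on U \<Longrightarrow> continuous_on U f"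
proof (induction rule: radical_on.induct)
  case (inverse f)
  then show ?case by (intro continuous_on_inverse) auto
next
  case (cong f g)
  then show ?case using continuous_on_cong by force
qed (intro continuous_intros; assumption)+

definition has_radical_partials :: "(real^'m::finite) set \<Rightarrow> (real^'m \<Rightarrow> real) \<Rightarrow> bool" where
  "has_radical_partials U f \<longleftrightarrow> (\<forall>j. \<exists>f'\<in>radical_on U. \<forall>x\<in>U.
     ((\<lambda>s. f (x + s *\<^sub>R axis j 1)) has_real_derivative f' x) (at 0))"

lemma has_radical_partials_const: "has_radical_partials U (\<lambda>x. c)"
  unfolding has_radical_partials_def by (intro allI bexI[OF _ radical_on.const[of 0]]) simp

lemma has_radical_partials_coordinate: "has_radical_partials U (\<lambda>x. x $ k)"
  unfolding has_radical_partials_def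
proof
  fix j
  show "\<exists>f'\<in>radical_on U. \<forall>x\<in>U. ((\<lambda>s. (x + s *\<^sub>R axis j 1) $ k) has_real_derivative f' x) (at 0)"
    by (rule bexI[OF _ radical_on.const[of "axis j 1 $ k"]]) (auto intro!: derivative_eq_intros)
qed

lemma has_radical_partials_add:
  assumes "has_radical_partials U f" "has_radical_partials U g"
  shows "has_radical_partials U (\<lambda>x. f x + g x)"
  unfolding has_radical_partials_def
proof
  fix j
  obtain f' g' where "f' \<in> radical_on U" "g' \<in> radical_on U"
    and "\<forall>x\<in>U. ((\<lambda>s. f (x + s *\<^sub>R axis j 1)) has_real_derivative f' x) (at 0)"
    and "\<forall>x\<in>U. ((\<lambda>s. g (x + s *\<^sub>R axis j 1)) has_real_derivative g' x) (at 0)"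
    using assms unfolding has_radical_partials_def by meson
  then show "\<exists>h\<in>radical_on U. \<forall>x\<in>U.
      ((\<lambda>s. f (x + s *\<^sub>R axis j 1) + g (x + s *\<^sub>R axis j 1)) has_real_derivative h x) (at 0)"
    by (intro bexI[of _ "\<lambda>x. f' x + g' x"] ballI DERIV_add radical_on.add) auto
qed

lemma has_radical_partials_mult:
  assumes "f \<in> radical_on U" "g \<in> radical_on U"
    and "has_radical_partials U f" "has_radical_partials U g"
  shows "has_radical_partials U (\<lambda>x. f x * g x)"
  unfolding has_radical_partials_def
proof
  fix j
  obtain f' g' where "f' \<in> radical_on U" "g' \<in> radical_on U"
    and f': "\<forall>x\<in>U. ((\<lambda>s. f (x + s *\<^sub>R axis j 1)) has_real_derivative f' x) (at 0)"
    and g': "\<forall>x\<in>U. ((\<lambda>s. g (x + s *\<^sub>R axis j 1)) has_real_derivative g' x) (at 0)"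
    using assms(3,4) unfolding has_radical_partials_def by meson
  define D where "D x = f' x * g x + g' x * f x" for x
  have "\<forall>x\<in>U. ((\<lambda>s. f (x + s *\<^sub>R axis j 1) * g (x + s *\<^sub>R axis j 1)) has_real_derivative D x) (at 0)"
    using DERIV_mult[OF f'[rule_format] g'[rule_format]] by (simp add: D_def)
  moreover have "D \<in> radical_on U"
    unfolding D_def
    by (intro radical_on.add radical_on.mult assms(1,2) \<open>f' \<in> radical_on U\<close> \<open>g' \<in> radical_on U\<close>)
  ultimately show "\<exists>h\<in>radical_on U. \<forall>x\<in>U.
      ((\<lambda>s. f (x + s *\<^sub>R axis j 1) * g (x + s *\<^sub>R axis j 1)) has_real_derivative h x) (at 0)"
    by blast
qed

lemma has_radical_partials_comp:
  assumes "has_radical_partials U f" "\<phi>' \<in> radical_on U"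
    and "\<forall>x\<in>U. (\<phi> has_real_derivative \<phi>' x) (at (f x))"
  shows "has_radical_partials U (\<lambda>x. \<phi> (f x))"
  unfolding has_radical_partials_def
proof
  fix j
  obtain f' where "f' \<in> radical_on U"
    and f': "\<forall>x\<in>U. ((\<lambda>s. f (x + s *\<^sub>R axis j 1)) has_real_derivative f' x) (at 0)"
    using assms(1) unfolding has_radical_partials_def by meson
  define D where "D x = \<phi>' x * f' x" for x
  have "\<forall>x\<in>U. ((\<lambda>s. \<phi> (f (x + s *\<^sub>R axis j 1))) has_real_derivative D x) (at 0)"
  proof
    fix x assume "x \<in> U"
    then have "(\<phi> has_real_derivative \<phi>' x) (at ((\<lambda>s. f (x + s *\<^sub>R axis j 1)) 0))"
      using assms(3) by simp
    from DERIV_chain2[OF this f'[rule_format, OF \<open>x \<in> U\<close>]]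
    show "((\<lambda>s. \<phi> (f (x + s *\<^sub>R axis j 1))) has_real_derivative D x) (at 0)"
      by (simp add: D_def)
  qed
  moreover have "D \<in> radical_on U"
    unfolding D_def by (intro radical_on.mult assms(2) \<open>f' \<in> radical_on U\<close>)
  ultimately show "\<exists>h\<in>radical_on U. \<forall>x\<in>U.
      ((\<lambda>s. \<phi> (f (x + s *\<^sub>R axis j 1))) has_real_derivative h x) (at 0)"
    by blast
qed

lemma has_radical_partials_inverse:
  assumes "f \<in> radical_on U" "\<forall>x\<in>U. 0 < f x" "has_radical_partials U f"
  shows "has_radical_partials U (\<lambda>x. inverse (f x))"
proof (rule has_radical_partials_comp[OF assms(3)])
  have "(\<lambda>x. (-1) * (inverse (f x) * inverse (f x))) \<in> radical_on U"
    by (intro radical_on.mult radical_on.const radical_on.inverse assms(1,2))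
  then show "(\<lambda>x. - (inverse (f x) ^ 2)) \<in> radical_on U"
    by (rule radical_on.cong) (simp add: power2_eq_square)
  show "\<forall>x\<in>U. (inverse has_real_derivative - (inverse (f x) ^ 2)) (at (f x))"
  proof
    fix x assume "x \<in> U"
    then have "f x \<noteq> 0" using assms(2) by force
    from DERIV_inverse[OF this] show "(inverse has_real_derivative - (inverse (f x) ^ 2)) (at (f x))"
      by (simp add: numeral_2_eq_2)
  qed
qed

lemma has_radical_partials_root:
  assumes "f \<in> radical_on U" "\<forall>x\<in>U. 0 < f x" "has_radical_partials U f"
  shows "has_radical_partials U (\<lambda>x. root m (f x))"
proof (cases "m = 0")
  case True
  then show ?thesis by (simp add: has_radical_partials_const)
next
  case False
  let ?R = "\<lambda>x. real m * root m (f x) ^ (m - 1)"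
  show ?thesis
  proof (rule has_radical_partials_comp[OF assms(3)])
    have "?R \<in> radical_on U"
      by (intro radical_on.mult radical_on.const radical_on_power radical_on.root assms(1,2))
    moreover have "\<forall>x\<in>U. 0 < ?R x"
      using False assms(2) by auto
    ultimately show "(\<lambda>x. inverse (?R x)) \<in> radical_on U"
      by (rule radical_on.inverse)
    show "\<forall>x\<in>U. (root m has_real_derivative inverse (?R x)) (at (f x))"
    proof
      fix x assume "x \<in> U"
      with False assms(2) show "(root m has_real_derivative inverse (?R x)) (at (f x))"
        using DERIV_real_root[of m "f x"] by simp
    qed
  qed
qed

lemma has_radical_partials_cong:
  fixes f g :: "real^'m::finite \<Rightarrow> real"
  assumes "open U" "has_radical_partials U f" "\<forall>x\<in>U. g x = f x"
  shows "has_radical_partials U g"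
  unfolding has_radical_partials_def
proof (intro allI)
  fix j
  obtain f' where "f' \<in> radical_on U"
    and f': "\<forall>x\<in>U. ((\<lambda>s. f (x + s *\<^sub>R axis j 1)) has_real_derivative f' x) (at 0)"
    using assms(2) unfolding has_radical_partials_def by meson
  have "((\<lambda>s. g (x + s *\<^sub>R axis j 1)) has_real_derivative f' x) (at 0)" if "x \<in> U" for x
  proof -
    have "open ((\<lambda>s::real. x + s *\<^sub>R axis j 1) -` U)"
      by (rule continuous_open_vimage[OF \<open>open U\<close>]) (intro continuous_intros)
    then have "eventually (\<lambda>s. x + s *\<^sub>R axis j 1 \<in> U) (nhds 0)"
      using eventually_nhds_in_open \<open>x \<in> U\<close> by fastforce
    then have "eventually (\<lambda>s. f (x + s *\<^sub>R axis j 1) = g (x + s *\<^sub>R axis j 1)) (nhds 0)"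
      by eventually_elim (use assms(3) in auto)
    from DERIV_cong_ev[OF refl this refl] f' that show ?thesis by blast
  qed
  with \<open>f' \<in> radical_on U\<close> show "\<exists>g'\<in>radical_on U. \<forall>x\<in>U.
      ((\<lambda>s. g (x + s *\<^sub>R axis j 1)) has_real_derivative g' x) (at 0)"
    by blast
qed

lemma radical_on_has_radical_partials:
  assumes "open U"
  shows "f \<in> radical_on U \<Longrightarrow> has_radical_partials U f"
proof (induction rule: radical_on.induct)
  case (const c)
  show ?case by (rule has_radical_partials_const)
next
  case (coordinate k)
  show ?case by (rule has_radical_partials_coordinate)
next
  case (add f g)
  from add.IH show ?case by (rule has_radical_partials_add)
next
  case (mult f g)
  then show ?case by (rule has_radical_partials_mult)
next
  case (inverse f)
  then show ?case by (rule has_radical_partials_inverse)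
next
  case (root f m)
  then show ?case by (rule has_radical_partials_root)
next
  case (cong f g)
  from assms cong.IH cong.hyps(2) show ?case by (rule has_radical_partials_cong)
qed

lemma radical_on_imp_smooth_on: "open U \<Longrightarrow> f \<in> radical_on U \<Longrightarrow> smooth_on U f"
  unfolding smooth_on_def
  using radical_on_imp_continuous_on radical_on_has_radical_partials
  unfolding has_radical_partials_def by (intro exI[of _ "radical_on U"]) blast

definition radical_at :: "(real^'m::finite \<Rightarrow> real) \<Rightarrow> real^'m \<Rightarrow> bool" where
  "radical_at f x \<longleftrightarrow> (\<exists>U. open U \<and> x \<in> U \<and> f \<in> radical_on U)"

lemma radical_at_imp_smooth_on:
  assumes "radical_at f x"
  obtains U where "open U" "x \<in> U" "smooth_on U f"
  using assms radical_on_imp_smooth_on unfolding radical_at_def by blast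

lemma radical_at_const: "radical_at (\<lambda>y. c) x"
  unfolding radical_at_def by (blast intro: radical_on.const)

lemma radical_at_coordinate: "radical_at (\<lambda>y. y $ k) x"
  unfolding radical_at_def by (blast intro: radical_on.coordinate)

lemma radical_at_binop:
  assumes "radical_at f x" "radical_at g x"
    and "\<And>U. f \<in> radical_on U \<Longrightarrow> g \<in> radical_on U \<Longrightarrow> h \<in> radical_on U"
  shows "radical_at h x"
proof -
  obtain U V where "open U" "x \<in> U" "f \<in> radical_on U" "open V" "x \<in> V" "g \<in> radical_on V"
    using assms(1,2) unfolding radical_at_def by blast
  then have "f \<in> radical_on (U \<inter> V)" "g \<in> radical_on (U \<inter> V)"
    by (auto intro: radical_on_subset)
  with \<open>open U\<close> \<open>open V\<close> \<open>x \<in> U\<close> \<open>x \<in> V\<close> assms(3) show ?thesis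
    unfolding radical_at_def by blast
qed

lemma radical_at_add: "radical_at f x \<Longrightarrow> radical_at g x \<Longrightarrow> radical_at (\<lambda>y. f y + g y) x"
  by (erule radical_at_binop, assumption) (rule radical_on.add)

lemma radical_at_mult: "radical_at f x \<Longrightarrow> radical_at g x \<Longrightarrow> radical_at (\<lambda>y. f y * g y) x"
  by (erule radical_at_binop, assumption) (rule radical_on.mult)

lemma radical_at_cong:
  assumes "radical_at f x" "eventually (\<lambda>y. f y = g y) (nhds x)"
  shows "radical_at g x"
proof -
  obtain U V where "open U" "x \<in> U" "f \<in> radical_on U" "open V" "x \<in> V" "\<forall>y\<in>V. f y = g y"
    using assms unfolding radical_at_def eventually_nhds by blast
  then have "f \<in> radical_on (U \<inter> V)"
    by (blast intro: radical_on_subset)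
  then have "g \<in> radical_on (U \<inter> V)"
    by (rule radical_on.cong) (use \<open>\<forall>y\<in>V. f y = g y\<close> in auto)
  with \<open>open U\<close> \<open>open V\<close> \<open>x \<in> U\<close> \<open>x \<in> V\<close> show ?thesis
    unfolding radical_at_def by blast
qed

lemma radical_at_uminus: "radical_at f x \<Longrightarrow> radical_at (\<lambda>y. - f y) x"
  by (rule radical_at_cong[OF radical_at_mult[OF radical_at_const[of "-1"]]]) auto

lemma radical_at_diff: "radical_at f x \<Longrightarrow> radical_at g x \<Longrightarrow> radical_at (\<lambda>y. f y - g y) x"
  using radical_at_add[OF _ radical_at_uminus] by simp

lemma radical_at_divide_const: "radical_at f x \<Longrightarrow> radical_at (\<lambda>y. f y / c) x"
  using radical_at_mult[OF _ radical_at_const[of "inverse c"]] by (simp add: divide_inverse)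

lemma radical_at_shrink:
  assumes "radical_at f x" "open B" "f x \<in> B"
  obtains U where "open U" "x \<in> U" "f \<in> radical_on U" "\<forall>y\<in>U. f y \<in> B"
proof -
  obtain V where V: "open V" "x \<in> V" "f \<in> radical_on V"
    using assms(1) unfolding radical_at_def by blast
  have "continuous_on V f"
    using V(3) by (rule radical_on_imp_continuous_on)
  then have "open (f -` B \<inter> V)"
    using continuous_on_open_vimage[OF V(1)] assms(2) by blast
  moreover have "f \<in> radical_on (f -` B \<inter> V)"
    by (rule radical_on_subset[OF V(3)]) blast
  ultimately show thesis
    using that[of "f -` B \<inter> V"] V(2) assms(3) by blast
qed

lemma radical_at_root:
  assumes "radical_at f x" "0 < f x"
  shows "radical_at (\<lambda>y. root m (f y)) x"
proof -
  from assms(2) have "f x \<in> {0<..}" by simp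
  then obtain U where "open U" "x \<in> U" "f \<in> radical_on U" "\<forall>y\<in>U. f y \<in> {0<..}"
    by (rule radical_at_shrink[OF assms(1) open_greaterThan])
  then show ?thesis
    unfolding radical_at_def by (auto intro!: radical_on.root)
qed

text \<open>This makes the case splits of the robustness recursion locally constant.\<close>

lemma radical_at_eventually_sgn:
  assumes "radical_at f x" "f x \<noteq> 0"
  shows "eventually (\<lambda>y. sgn (f y) = sgn (f x)) (nhds x)"
proof -
  define B where "B = {y. sgn y = sgn (f x)}"
  have "B = {0<..} \<or> B = {..<0}"
    using assms(2) by (cases "0 < f x") (auto simp: B_def sgn_if)
  then have "open B" by auto
  moreover have "f x \<in> B" by (simp add: B_def)
  ultimately obtain U where "open U" "x \<in> U" "\<forall>y\<in>U. f y \<in> B"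
    by (rule radical_at_shrink[OF assms(1)])
  then show ?thesis
    unfolding eventually_nhds B_def mem_Collect_eq by blast
qed

lemma radical_at_sum_list:
  "(\<And>a. a \<in> set xs \<Longrightarrow> radical_at (h a) x) \<Longrightarrow> radical_at (\<lambda>y. \<Sum>a\<leftarrow>xs. h a y) x"
  by (induction xs) (simp_all add: radical_at_const radical_at_add)

lemma radical_at_prod_list:
  "(\<And>a. a \<in> set xs \<Longrightarrow> radical_at (h a) x) \<Longrightarrow> radical_at (\<lambda>y. \<Prod>a\<leftarrow>xs. h a y) x"
  by (induction xs) (simp_all add: radical_at_const radical_at_mult)

lemma prod_list_pos:
  "(\<And>x. x \<in> set xs \<Longrightarrow> 0 < x) \<Longrightarrow> 0 < prod_list (xs :: 'a::linordered_semidom list)"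
  by (induction xs) auto

definition agm_and :: "real list \<Rightarrow> real" where
  "agm_and xs = (if \<forall>x\<in>set xs. 0 < x
     then root (length xs) (\<Prod>x\<leftarrow>xs. 1 + x) - 1
     else (\<Sum>x\<leftarrow>xs. min x 0) / real (length xs))"

definition agm_or :: "real list \<Rightarrow> real" where
  "agm_or xs = (if \<exists>x\<in>set xs. 0 < x
     then (\<Sum>x\<leftarrow>xs. max x 0) / real (length xs)
     else 1 - root (length xs) (\<Prod>x\<leftarrow>xs. 1 - x))"

text \<open>De Morgan duality; it fails when some value is 0, where the two case splits disagree.\<close>

lemma agm_or_eq_uminus_agm_and: "0 \<notin> set xs \<Longrightarrow> agm_or xs = - agm_and (map uminus xs)"
proof -
  assume "0 \<notin> set xs"
  then have "(\<exists>x\<in>set xs. 0 < x) \<longleftrightarrow> \<not> (\<forall>x\<in>set xs. 0 < - x)"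
    by (metis linorder_neqE_linordered_idom neg_0_less_iff_less not_less_iff_gr_or_eq)
  moreover have "(\<Sum>x\<leftarrow>xs. min (- x) 0) = - (\<Sum>x\<leftarrow>xs. max x 0)"
    by (induction xs) (auto simp: min_def max_def)
  ultimately show ?thesis
    unfolding agm_or_def agm_and_def by (simp add: o_def)
qed

lemma radical_at_agm_and:
  assumes "\<And>a. a \<in> set xs \<Longrightarrow> radical_at (h a) x \<and> h a x \<noteq> 0"
  shows "radical_at (\<lambda>y. agm_and (map (\<lambda>a. h a y) xs)) x"
proof -
  have "eventually (\<lambda>y. \<forall>a\<in>set xs. sgn (h a y) = sgn (h a x)) (nhds x)"
    by (intro eventually_ball_finite finite_set ballI radical_at_eventually_sgn) (use assms in auto)
  then have same_sign: "eventually (\<lambda>y. \<forall>a\<in>set xs. (0 < h a y \<longleftrightarrow> 0 < h a x)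
      \<and> (h a y < 0 \<longleftrightarrow> h a x < 0)) (nhds x)"
    by eventually_elim (auto simp: sgn_if split: if_splits)
  show ?thesis
  proof (cases "\<forall>a\<in>set xs. 0 < h a x")
    case True
    have "0 < (\<Prod>a\<leftarrow>xs. 1 + h a x)"
      using True by (intro prod_list_pos) auto
    then have "radical_at (\<lambda>y. root (length xs) (\<Prod>a\<leftarrow>xs. 1 + h a y) - 1) x"
      using assms by (intro radical_at_diff radical_at_root radical_at_prod_list radical_at_add
          radical_at_const) auto
    moreover from same_sign have "eventually (\<lambda>y.
        root (length xs) (\<Prod>a\<leftarrow>xs. 1 + h a y) - 1 = agm_and (map (\<lambda>a. h a y) xs)) (nhds x)"
      by eventually_elim (use True in \<open>simp add: agm_and_def o_def\<close>)
    ultimately show ?thesis by (rule radical_at_cong)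
  next
    case False
    let ?g = "\<lambda>a. if 0 < h a x then (\<lambda>y. 0) else h a"
    have "radical_at (\<lambda>y. (\<Sum>a\<leftarrow>xs. ?g a y) / real (length xs)) x"
      using assms by (intro radical_at_divide_const radical_at_sum_list) (simp add: radical_at_const)
    moreover from same_sign have "eventually (\<lambda>y.
        (\<Sum>a\<leftarrow>xs. ?g a y) / real (length xs) = agm_and (map (\<lambda>a. h a y) xs)) (nhds x)"
    proof eventually_elim
      case (elim y)
      then have not_all_pos: "\<not> (\<forall>z\<in>set (map (\<lambda>a. h a y) xs). 0 < z)"
        and min_eq: "\<forall>a\<in>set xs. min (h a y) 0 = ?g a y"
        using False assms by (auto simp: min_def)
      from not_all_pos have "agm_and (map (\<lambda>a. h a y) xs)
          = (\<Sum>z\<leftarrow>map (\<lambda>a. h a y) xs. min z 0) / real (length (map (\<lambda>a. h a y) xs))"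
        unfolding agm_and_def by (rule if_not_P)
      with min_eq show ?case
        by (simp add: o_def cong: map_cong)
    qed
    ultimately show ?thesis by (rule radical_at_cong)
  qed
qed

lemma radical_at_agm_or:
  assumes "\<And>a. a \<in> set xs \<Longrightarrow> radical_at (h a) x \<and> h a x \<noteq> 0"
  shows "radical_at (\<lambda>y. agm_or (map (\<lambda>a. h a y) xs)) x"
proof -
  have "radical_at (\<lambda>y. - agm_and (map (\<lambda>a. - h a y) xs)) x"
    using assms by (intro radical_at_uminus radical_at_agm_and) (simp add: radical_at_uminus)
  moreover have "eventually (\<lambda>y. \<forall>a\<in>set xs. sgn (h a y) = sgn (h a x)) (nhds x)"
    by (intro eventually_ball_finite finite_set ballI radical_at_eventually_sgn) (use assms in auto)
  then have "eventually (\<lambda>y.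
      - agm_and (map (\<lambda>a. - h a y) xs) = agm_or (map (\<lambda>a. h a y) xs)) (nhds x)"
  proof eventually_elim
    case (elim y)
    then have "0 \<notin> set (map (\<lambda>a. h a y) xs)"
      using assms by (auto simp: sgn_0_0)
    then show ?case
      by (simp add: agm_or_eq_uminus_agm_and o_def)
  qed
  ultimately show ?thesis by (rule radical_at_cong)
qed

lemma eta_Conj: "eta T S (Conj ps) t = agm_and (map (\<lambda>p. eta T S p t) ps)"
  by (simp add: agm_and_def o_def)

lemma eta_Disj: "eta T S (Disj ps) t = agm_or (map (\<lambda>p. eta T S p t) ps)"
  by (simp add: agm_or_def o_def)

lemma eta_Glob:
  assumes "finite (window T t a b)"
  shows "eta T S (Glob a b p) t
    = agm_and (map (\<lambda>s. eta T S p s) (sorted_list_of_set (window T t a b)))"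
proof -
  define xs where "xs = sorted_list_of_set (window T t a b)"
  have "window T t a b = set xs" "distinct xs"
    using assms by (simp_all add: xs_def)
  then show ?thesis
    unfolding xs_def[symmetric]
    by (simp add: agm_and_def o_def distinct_card sum.distinct_set_conv_list
        prod.distinct_set_conv_list)
qed

lemma eta_Fin:
  assumes "finite (window T t a b)"
  shows "eta T S (Fin a b p) t
    = agm_or (map (\<lambda>s. eta T S p s) (sorted_list_of_set (window T t a b)))"
proof -
  define xs where "xs = sorted_list_of_set (window T t a b)"
  have "window T t a b = set xs" "distinct xs"
    using assms by (simp_all add: xs_def)
  then show ?thesis
    unfolding xs_def[symmetric]
    by (simp add: agm_or_def o_def distinct_card sum.distinct_set_conv_list
        prod.distinct_set_conv_list)
qed

lemma finite_window_if_stl_wf: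
  assumes "stl_wf T n phi t"
    and "(Glob a b p, s) \<in> evalpairs T phi t \<or> (Fin a b p, s) \<in> evalpairs T phi t"
  shows "finite (window T s a b)"
  using assms unfolding stl_wf_def by fastforce

lemma eta_eq_if_eq_on_predvars:
  assumes "(psi, s) \<in> evalpairs T phi t" "\<forall>(i, s')\<in>predvars T phi t. S1 i s' = S2 i s'"
  shows "eta T S1 psi s = eta T S2 psi s"
  using assms(1)
proof (induction psi arbitrary: s)
  case (Pred i c)
  then have "(i, s) \<in> predvars T phi t" unfolding predvars_def by auto
  then show ?case using assms(2) by auto
next
  case (Neg p)
  then show ?case using evalpairs.neg by fastforce
next
  case (Conj ps)
  then have "\<forall>p\<in>set ps. eta T S1 p s = eta T S2 p s"
    using evalpairs.conj by blast
  then show ?case by (simp add: eta_Conj cong: map_cong)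
next
  case (Disj ps)
  then have "\<forall>p\<in>set ps. eta T S1 p s = eta T S2 p s"
    using evalpairs.disj by blast
  then show ?case by (simp add: eta_Disj cong: map_cong)
next
  case (Glob a b p)
  then have "\<forall>s'\<in>window T s a b. eta T S1 p s' = eta T S2 p s'"
    using evalpairs.glob by blast
  then show ?case by (simp cong: sum.cong prod.cong)
next
  case (Fin a b p)
  then have "\<forall>s'\<in>window T s a b. eta T S1 p s' = eta T S2 p s'"
    using evalpairs.fin by blast
  then show ?case by (simp cong: sum.cong prod.cong)
qed simp_all

lemma radical_at_eta:
  fixes signal_of :: "real^'m::finite \<Rightarrow> signal"
  assumes wf: "stl_wf T n phi t"
    and coordinate: "\<And>i c s. (Pred i c, s) \<in> evalpairs T phi t \<Longrightarrow> \<exists>k. \<forall>v. signal_of v i s = v $ k"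
    and nonzero: "\<And>psi s. (psi, s) \<in> evalpairs T phi t \<Longrightarrow> eta T (signal_of v\<^sub>0) psi s \<noteq> 0"
  shows "(psi, s) \<in> evalpairs T phi t \<Longrightarrow> radical_at (\<lambda>v. eta T (signal_of v) psi s) v\<^sub>0"
proof (induction psi arbitrary: s)
  case (Pred i c)
  obtain k where "\<forall>v. signal_of v i s = v $ k"
    using coordinate[OF Pred.prems] by blast
  then show ?case
    by (simp add: radical_at_divide_const radical_at_diff radical_at_coordinate radical_at_const)
next
  case (Neg p)
  then show ?case
    using evalpairs.neg by (simp add: radical_at_uminus)
next
  case (Conj ps)
  then show ?case
    unfolding eta_Conj using evalpairs.conj nonzero by (intro radical_at_agm_and) blast
next
  case (Disj ps)
  then show ?case
    unfolding eta_Disj using evalpairs.disj nonzero by (intro radical_at_agm_or) blast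
next
  case (Glob a b p)
  then have "finite (window T s a b)"
    using finite_window_if_stl_wf[OF wf] by blast
  with Glob show ?case
    unfolding eta_Glob[OF \<open>finite (window T s a b)\<close>] using evalpairs.glob nonzero
    by (intro radical_at_agm_and) auto
next
  case (Fin a b p)
  then have "finite (window T s a b)"
    using finite_window_if_stl_wf[OF wf] by blast
  with Fin show ?case
    unfolding eta_Fin[OF \<open>finite (window T s a b)\<close>] using evalpairs.fin nonzero
    by (intro radical_at_agm_or) auto
qed (simp_all add: radical_at_const)

theorem mainTheorem7:
  fixes T :: "real set" and n :: nat and phi :: stl and t :: real
    and S :: signal and idx :: "'m::finite \<Rightarrow> nat \<times> real"
  assumes T_nonneg: "T \<subseteq> {0..}"
    and T_discrete: "\<forall>x\<in>T. \<exists>e>0. \<forall>y\<in>T. y \<noteq> x \<longrightarrow> e \<le> \<bar>y - x\<bar>"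
    and t_in: "t \<in> T"
    and wf: "stl_wf T n phi t"
    and S_range: "\<forall>i\<in>{1..n}. \<forall>t'\<in>T. S i t' \<in> {-1..1}"
    and idx: "bij_betw idx UNIV (predvars T phi t)"
    and nonzero: "\<forall>(psi, t')\<in>evalpairs T phi t. eta T S psi t' \<noteq> 0"
  shows "finite (predvars T phi t)
    \<and> (\<forall>S1 S2. (\<forall>(i, t')\<in>predvars T phi t. S1 i t' = S2 i t')
                \<longrightarrow> eta T S1 phi t = eta T S2 phi t)
    \<and> (\<exists>U. open U \<and> (\<chi> j. S (fst (idx j)) (snd (idx j))) \<in> U \<and>
         smooth_on U (\<lambda>v. eta T
            (\<lambda>i t'. if (i, t') \<in> predvars T phi t then v $ inv_into UNIV idx (i, t') else 0)
            phi t))"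
proof (intro conjI)
  have range_idx: "range idx = predvars T phi t"
    using idx by (simp add: bij_betw_def)
  then show "finite (predvars T phi t)"
    using finite_imageI[of UNIV idx] by simp
  show "\<forall>S1 S2. (\<forall>(i, t')\<in>predvars T phi t. S1 i t' = S2 i t') \<longrightarrow> eta T S1 phi t = eta T S2 phi t"
    using eta_eq_if_eq_on_predvars[OF evalpairs.base] by blast
  define signal_of where "signal_of = (\<lambda>(v::real^'m) i t'.
    if (i, t') \<in> predvars T phi t then v $ inv_into UNIV idx (i, t') else 0)"
  define v\<^sub>0 where "v\<^sub>0 = (\<chi> j. S (fst (idx j)) (snd (idx j)))"
  have agree: "\<forall>(i, s)\<in>predvars T phi t. signal_of v\<^sub>0 i s = S i s"
    using range_idx by (auto simp: signal_of_def v\<^sub>0_def f_inv_into_f)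
  have "radical_at (\<lambda>v. eta T (signal_of v) phi t) v\<^sub>0"
  proof (rule radical_at_eta[OF wf _ _ evalpairs.base])
    show "\<exists>k. \<forall>v. signal_of v i s = v $ k" if "(Pred i c, s) \<in> evalpairs T phi t" for i c s
      using that by (auto simp: signal_of_def predvars_def)
    show "eta T (signal_of v\<^sub>0) psi s \<noteq> 0" if "(psi, s) \<in> evalpairs T phi t" for psi s
      using nonzero that eta_eq_if_eq_on_predvars[OF that agree] by auto
  qed
  then obtain U where "open U" "v\<^sub>0 \<in> U" "smooth_on U (\<lambda>v. eta T (signal_of v) phi t)"
    by (rule radical_at_imp_smooth_on)
  then show "\<exists>U. open U \<and> (\<chi> j. S (fst (idx j)) (snd (idx j))) \<in> U \<and>
      smooth_on U (\<lambda>v. eta T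
        (\<lambda>i t'. if (i, t') \<in> predvars T phi t then v $ inv_into UNIV idx (i, t') else 0) phi t)"
    unfolding signal_of_def v\<^sub>0_def by blast
qed

end
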